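(* Let $\mathbb{E}$ be a Boolean algebra, let $P:\mathbb{E}\to\mathbb{R}$ be a probability function, let $e_1,\dots,e_n\in\mathbb{E}$ be pairwise disjoint ($e_i\wedge e_j=\bot$ for $i\neq j$), let $y_1,\dots,y_n\in\mathbb{R}$, and let $X$ be the conditional value $X=\sum_{i=1}^n e_i\!:\to v(y_i)$. Let $F:\mathbb{R}\to\mathbb{R}$ be the function $F(x)=P(X=x)=\sum_{i=1}^n 0_{y_i-x}\cdot P(e_i)$. Then (1) $E_P(X)=E_{\mathit{pmf}}(F)$, and (2) $\mathit{VAR}_P(X)=\mathit{VAR}_{\mathit{pmf}}(F)$.
   Context: Work in the meadow of reals $\mathbb{R}_0$ (the reals with total inverse, $0^{-1}=0$). For a real $x$, $0_x=1-x\cdot x^{-1}$, so $0_x=1$ if $x=0$ and $0_x=0$ otherwise. A probability function on a Boolean algebra $(E,\vee,\wedge,\neg,\top,\bot)$ is a map $P:E\to\mathbb{R}$ with $P(\top)=1$, $P(\bot)=0$, $P(x)\ge 0$ and $P(x\vee y)=P(x)+P(y)-P(x\wedge y)$. Conditional values (CVs) are formal sums of terms $e\!:\to v(y)$ ($e$ an event, $y$ a real), combined with the meadow operations, where $e\!:\to Z$ denotes "$Z$ if event $e$ occurs, $0$ otherwise"; in particular, for pairwise disjoint $e_i$, $X^2=X\cdot X=\sum_{i=1}^n e_i\!:\to v(y_i^2)$. The expectation value of a CV is determined by $E_P(Z_1+Z_2)=E_P(Z_1)+E_P(Z_2)$ and $E_P(e\!:\to v(x))=P(e)\cdot x$, so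 $E_P(X)=\sum_i P(e_i)y_i$; $\mathit{VAR}_P(X)=E_P(X^2)-(E_P(X))^2$. Finite support summation: for a function $g:\mathbb{R}\to\mathbb{R}$, $\sum^\star_x g(x)$ is the sum of the nonzero values of $g$ if $g$ is nonzero at only finitely many arguments, and $0$ otherwise. For $F:\mathbb{R}\to\mathbb{R}$: $E_{\mathit{pmf}}(F)=\sum^\star_x (x\cdot F(x))$ and $\mathit{VAR}_{\mathit{pmf}}(F)=\sum^\star_x(x^2\cdot F(x))-E_{\mathit{pmf}}(F)^2$. *)

theory Defs
  imports Main "HOL.Real"
begin

definition probability_function :: "('a::boolean_algebra \<Rightarrow> real) \<Rightarrow> bool" where
  "probability_function P \<longleftrightarrow>
     P top = 1 \<and> P bot = 0 \<and> (\<forall>x. P x \<ge> 0) \<and>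
     (\<forall>x y. P (sup x y) = P x + P y - P (inf x y))"

text \<open>Meadow zero test: 0_x = 1 - x * x^{-1} (real inverse is total with inverse 0 = 0).\<close>
definition zero_test :: "real \<Rightarrow> real" where
  "zero_test x = 1 - x * inverse x"

text \<open>Conditional values: formal sums of terms e :-> v(y), represented as lists of
  (event, value) pairs; the list denotes the sum of its terms.\<close>
type_synonym 'a cv = "('a \<times> real) list"

definition cv_term :: "'a \<Rightarrow> real \<Rightarrow> 'a cv" where
  "cv_term e y = [(e, y)]"

definition cv_add :: "'a cv \<Rightarrow> 'a cv \<Rightarrow> 'a cv" where
  "cv_add X Y = X @ Y"

text \<open>Product of CVs: bilinear extension of (e :-> v(x)) * (f :-> v(y)) = (e \<and> f) :-> v(x*y).\<close>
definition cv_mult :: "'a::boolean_algebra cv \<Rightarrow> 'a cv \<Rightarrow> 'a cv" where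
  "cv_mult X Y = concat (map (\<lambda>(a, u). map (\<lambda>(b, w). (inf a b, u * w)) Y) X)"

definition cv_expect :: "('a \<Rightarrow> real) \<Rightarrow> 'a cv \<Rightarrow> real" where
  "cv_expect P X = sum_list (map (\<lambda>(e, x). P e * x) X)"

definition cv_var :: "('a::boolean_algebra \<Rightarrow> real) \<Rightarrow> 'a cv \<Rightarrow> real" where
  "cv_var P X = cv_expect P (cv_mult X X) - (cv_expect P X)^2"

definition fs_sum :: "(real \<Rightarrow> real) \<Rightarrow> real" where
  "fs_sum g = (if finite {x. g x \<noteq> 0} then sum g {x. g x \<noteq> 0} else 0)"

definition E_pmf :: "(real \<Rightarrow> real) \<Rightarrow> real" where
  "E_pmf F = fs_sum (\<lambda>x. x * F x)"

definition VAR_pmf :: "(real \<Rightarrow> real) \<Rightarrow> real" where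
  "VAR_pmf F = fs_sum (\<lambda>x. x^2 * F x) - (E_pmf F)^2"

definition cv_sum :: "nat \<Rightarrow> (nat \<Rightarrow> 'a) \<Rightarrow> (nat \<Rightarrow> real) \<Rightarrow> 'a cv" where
  "cv_sum n e y = foldr (\<lambda>i acc. cv_add (cv_term (e i) (y i)) acc) [1..<n+1] []"

end

theory Submission
  imports Defs
begin

text \<open>Both sides reduce to the same finite sums over the index set.  On the CV side the
  disjointness of the events kills the off-diagonal terms of the square of X, since P bot = 0.
  On the pmf side F is supported in the finite set of values y i, and regrouping the
  finite support sum of h x * F x (for any h) by the index i gives the sum of P (e i) * h (y i).\<close>

lemma zero_test_eq: "zero_test x = (if x = 0 then 1 else 0)"
  by (simp add: zero_test_def)

lemma sum_list_map_upt_Suc: "sum_list (map f [m..<Suc n]) = (\<Sum>i=m..n. f i)"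
  by (simp only: interv_sum_list_conv_sum_set_nat set_upt atLeastLessThanSuc_atLeastAtMost)

lemma cv_sum_eq_map: "cv_sum n e y = map (\<lambda>i. (e i, y i)) [1..<Suc n]"
proof -
  have "foldr (\<lambda>i acc. cv_add (cv_term (e i) (y i)) acc) xs [] = map (\<lambda>i. (e i, y i)) xs"
    for xs :: "nat list"
    by (induction xs) (simp_all add: cv_add_def cv_term_def)
  then show ?thesis
    by (simp add: cv_sum_def)
qed

lemma cv_expect_cv_sum: "cv_expect P (cv_sum n e y) = (\<Sum>i=1..n. P (e i) * y i)"
  by (simp add: cv_expect_def cv_sum_eq_map o_def sum_list_map_upt_Suc del: upt_Suc)

lemma cv_expect_cv_mult:
  "cv_expect P (cv_mult X Y) =
     sum_list (map (\<lambda>(a, u). sum_list (map (\<lambda>(b, w). P (inf a b) * (u * w)) Y)) X)"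
  by (induction X) (auto simp: cv_expect_def cv_mult_def o_def case_prod_beta)

lemma cv_expect_square_cv_sum:
  fixes P :: "'a::boolean_algebra \<Rightarrow> real"
  assumes "P bot = 0"
    and disjoint: "\<And>i j. i \<in> {1..n} \<Longrightarrow> j \<in> {1..n} \<Longrightarrow> i \<noteq> j \<Longrightarrow> inf (e i) (e j) = bot"
  shows "cv_expect P (cv_mult (cv_sum n e y) (cv_sum n e y)) = (\<Sum>i=1..n. P (e i) * (y i)^2)"
proof -
  have "cv_expect P (cv_mult (cv_sum n e y) (cv_sum n e y))
      = (\<Sum>i=1..n. \<Sum>j=1..n. P (inf (e i) (e j)) * (y i * y j))"
    by (simp add: cv_expect_cv_mult cv_sum_eq_map o_def sum_list_map_upt_Suc del: upt_Suc)
  also have "\<dots> = (\<Sum>i=1..n. \<Sum>j=1..n. if j = i then P (e i) * (y i)^2 else 0)"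
    by (intro sum.cong refl) (auto simp: disjoint assms(1) power2_eq_square)
  also have "\<dots> = (\<Sum>i=1..n. P (e i) * (y i)^2)"
    by simp
  finally show ?thesis .
qed

lemma fs_sum_eq_sum:
  assumes "finite S" and "{x. g x \<noteq> 0} \<subseteq> S"
  shows "fs_sum g = sum g S"
  using assms unfolding fs_sum_def
  by (auto intro!: sum.mono_neutral_left dest: finite_subset)

lemma fs_sum_point_masses:
  fixes h :: "real \<Rightarrow> real" and y :: "nat \<Rightarrow> real"
  assumes F: "\<And>x. F x = (\<Sum>i=1..n. zero_test (y i - x) * p i)"
  shows "fs_sum (\<lambda>x. h x * F x) = (\<Sum>i=1..n. p i * h (y i))"
proof -
  have support: "{x. h x * F x \<noteq> 0} \<subseteq> y ` {1..n}"
  proof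
    fix x
    assume "x \<in> {x. h x * F x \<noteq> 0}"
    then have "(\<Sum>i=1..n. zero_test (y i - x) * p i) \<noteq> 0"
      by (simp add: F)
    then obtain i where "i \<in> {1..n}" "zero_test (y i - x) * p i \<noteq> 0"
      by (rule sum.not_neutral_contains_not_neutral)
    then show "x \<in> y ` {1..n}"
      by (auto simp: zero_test_eq split: if_splits)
  qed
  have "fs_sum (\<lambda>x. h x * F x) = (\<Sum>x\<in>y ` {1..n}. h x * F x)"
    using support by (intro fs_sum_eq_sum) simp_all
  also have "\<dots> = (\<Sum>x\<in>y ` {1..n}. \<Sum>i=1..n. if y i = x then p i * h x else 0)"
    by (auto simp: F sum_distrib_left zero_test_eq intro!: sum.cong)
  also have "\<dots> = (\<Sum>i=1..n. \<Sum>x\<in>y ` {1..n}. if y i = x then p i * h x else 0)"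
    by (rule sum.swap)
  also have "\<dots> = (\<Sum>i=1..n. p i * h (y i))"
    by (intro sum.cong refl) (simp add: sum.delta)
  finally show ?thesis .
qed

theorem mainTheorem3:
  fixes P :: "'a::boolean_algebra \<Rightarrow> real"
    and e :: "nat \<Rightarrow> 'a" and y :: "nat \<Rightarrow> real" and n :: nat
    and X :: "'a cv" and F :: "real \<Rightarrow> real"
  assumes "probability_function P"
    and "\<And>i j. i \<in> {1..n} \<Longrightarrow> j \<in> {1..n} \<Longrightarrow> i \<noteq> j \<Longrightarrow> inf (e i) (e j) = bot"
    and "X = cv_sum n e y"
    and "\<And>x. F x = (\<Sum>i=1..n. zero_test (y i - x) * P (e i))"
  shows "cv_expect P X = E_pmf F \<and> cv_var P X = VAR_pmf F"
proof -
  have "P bot = 0"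
    using assms(1) by (simp add: probability_function_def)
  then have "cv_expect P (cv_mult X X) = (\<Sum>i=1..n. P (e i) * (y i)^2)"
    unfolding assms(3) using assms(2) by (rule cv_expect_square_cv_sum)
  moreover have "fs_sum (\<lambda>x. x^2 * F x) = (\<Sum>i=1..n. P (e i) * (y i)^2)"
    using assms(4) by (rule fs_sum_point_masses)
  moreover have "E_pmf F = (\<Sum>i=1..n. P (e i) * y i)"
    unfolding E_pmf_def using assms(4) by (rule fs_sum_point_masses)
  moreover have "cv_expect P X = (\<Sum>i=1..n. P (e i) * y i)"
    using assms(3) by (simp add: cv_expect_cv_sum)
  ultimately show ?thesis
    by (simp add: cv_var_def VAR_pmf_def)
qed

end
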